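(* Let $\mathbb B$ be a real separable Banach space and $(X_i)_{i\in\mathbb Z}$ a stationary sequence of centered $\mathbb B$-valued random variables with $\mathbb E\|X_0\|_{\mathbb B}^2<\infty$, adapted to a non-decreasing stationary filtration $(\mathcal F_i)$, with $S_n=X_1+\dots+X_n$. Assume (a) $\sum_{k\ge1}\gamma(k)<\infty$; (b) $n^{-1/2}S_n$ converges in distribution to a Gaussian $\mathbb B$-valued $G$ with covariance operator $K_G(x^*,y^* )=\sum_{k\in\mathbb Z}\mathrm{cov}(x^*(X_0),y^*(X_k))$; (c) $(\|S_n\|_{\mathbb B}^2/n)_{n\ge1}$ is uniformly integrable. Then for every symmetric continuous bilinear form $\varphi$ on $\mathbb B\times\mathbb B$, $$\mathbb E[\varphi(G,G)]=\mathbb E[\varphi(X_0,X_0)]+2\sum_{k\ge1}\mathbb E[\varphi(X_0,X_k)].$$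
   Context: $\gamma(k)=\mathbb E\big(\sup_A|\mathbb E[A(X_0,X_k)\mid\mathcal F_0]|\big)$, the supremum being over all continuous bilinear forms $A$ on $\mathbb B\times\mathbb B$ with $\|A\|\le1$. *)

theory Defs
  imports "HOL-Probability.Probability"
begin

definition cont_bilinear_form :: "('b::real_normed_vector \<Rightarrow> 'b \<Rightarrow> real) \<Rightarrow> bool" where
  "cont_bilinear_form A \<longleftrightarrow> bounded_bilinear A"

definition bilin_norm_le1 :: "('b::real_normed_vector \<Rightarrow> 'b \<Rightarrow> real) \<Rightarrow> bool" where
  "bilin_norm_le1 A \<longleftrightarrow> cont_bilinear_form A \<and> (\<forall>x y. \<bar>A x y\<bar> \<le> norm x * norm y)"

definition Tpow :: "'a measure \<Rightarrow> ('a \<Rightarrow> 'a) \<Rightarrow> int \<Rightarrow> 'a \<Rightarrow> 'a" where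
  "Tpow M T i = (if 0 \<le> i then T ^^ nat i else (inv_into (space M) T) ^^ nat (- i))"

text \<open>gamma(k) = E( sup_A |E[A(X_0,X_k) | F_0]| ), the supremum over the (uncountable) family
  of continuous bilinear forms of norm \<le> 1 being understood as the essential supremum;
  E(ess sup) is the infimum of E(Y) over measurable Y dominating every member a.s.\<close>
definition gamma_coef :: "'a measure \<Rightarrow> 'a measure \<Rightarrow> (int \<Rightarrow> 'a \<Rightarrow> 'b::real_normed_vector) \<Rightarrow> int \<Rightarrow> ennreal" where
  "gamma_coef M F0 X k =
     (INF Y \<in> {Y \<in> borel_measurable M. \<forall>A. bilin_norm_le1 A \<longrightarrow>
               (AE \<omega> in M. ennreal \<bar>real_cond_exp M F0 (\<lambda>\<omega>. A (X 0 \<omega>) (X k \<omega>)) \<omega>\<bar> \<le> Y \<omega>)}.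
        \<integral>\<^sup>+ \<omega>. Y \<omega> \<partial>M)"

definition conv_in_distr :: "'a measure \<Rightarrow> (nat \<Rightarrow> 'a \<Rightarrow> 'b::metric_space) \<Rightarrow> 'b measure \<Rightarrow> bool" where
  "conv_in_distr M Z mu \<longleftrightarrow>
     (\<forall>f :: 'b \<Rightarrow> real. continuous_on UNIV f \<longrightarrow> bounded (range f) \<longrightarrow>
        ((\<lambda>n. \<integral>\<omega>. f (Z n \<omega>) \<partial>M) \<longlonglongrightarrow> (\<integral>x. f x \<partial>mu)))"

definition unif_integrable :: "'a measure \<Rightarrow> (nat \<Rightarrow> 'a \<Rightarrow> real) \<Rightarrow> bool" where
  "unif_integrable M Y \<longleftrightarrow> (\<forall>n. integrable M (Y n)) \<and>
     ((\<lambda>c. SUP n. \<integral>\<^sup>+ \<omega>. ennreal (indicator {\<omega>. \<bar>Y n \<omega>\<bar> > c} \<omega> * \<bar>Y n \<omega>\<bar>) \<partial>M)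
        \<longlongrightarrow> 0) at_top"

text \<open>Gaussian (Borel) probability measure on a real normed space: every continuous linear functional
  has a (possibly degenerate) normal law.\<close>
definition gaussian_measure :: "'b::real_normed_vector measure \<Rightarrow> bool" where
  "gaussian_measure mu \<longleftrightarrow> prob_space mu \<and> sets mu = sets borel \<and>
     (\<forall>f :: 'b \<Rightarrow> real. bounded_linear f \<longrightarrow>
        (\<exists>m. distr mu borel f = return borel m) \<or>
        (\<exists>m \<sigma>. \<sigma> > 0 \<and> distr mu borel f = density lborel (normal_density m \<sigma>)))"

end

theory Submission
  imports Defs
begin

text \<open>
  Write c(k) = E \<phi>(X(0), X(k)). By stationarity and symmetry of \<phi>,
  E \<phi>(S(n), S(n)) = n c(0) + 2 \<Sum>m<n. \<Sum>k=1..m. c(k), so E \<phi>(S(n), S(n)) / n is c(0)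
  plus twice a Cesaro mean of the partial sums of \<Sum>k\<ge>1. c(k); this series converges
  absolutely since |c(k)| \<le> \<parallel>\<phi>\<parallel> \<gamma>(k). On the other hand x \<mapsto> \<phi>(x, x) is continuous with
  quadratic growth: its truncations at level m are bounded and continuous, so convergence in
  distribution of S(n)/\<surd>n applies to them, and uniform integrability of \<parallel>S(n)\<parallel>^2/n makes the
  truncation error small uniformly in n. Hence E \<phi>(S(n), S(n)) / n also tends to E \<phi>(G, G).
\<close>

section \<open>Iterates of a measure-preserving map\<close>

lemma measurable_funpow: "T \<in> M \<rightarrow>\<^sub>M M \<Longrightarrow> T ^^ n \<in> M \<rightarrow>\<^sub>M M"
  by (induction n) (auto intro: measurable_comp)

lemma distr_funpow:
  assumes "T \<in> M \<rightarrow>\<^sub>M M" "distr M M T = M"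
  shows "distr M M (T ^^ n) = M"
proof (induction n)
  case 0
  then show ?case by (simp add: distr_id2 id_def)
next
  case (Suc n)
  have "distr M M (T ^^ Suc n) = distr (distr M M (T ^^ n)) M T"
    using distr_distr[OF assms(1) measurable_funpow[OF assms(1)]] by (simp add: comp_def)
  then show ?case by (simp only: Suc assms(2))
qed

section \<open>Cesaro means and Toeplitz double sums\<close>

lemma cesaro_mean_tendsto:
  fixes s :: "nat \<Rightarrow> real"
  assumes "s \<longlonglongrightarrow> L"
  shows "(\<lambda>n. (\<Sum>m<n. s m) / real n) \<longlonglongrightarrow> L"
proof (rule LIMSEQ_I)
  fix r :: real assume "r > 0"
  then obtain N where N: "\<And>m. m \<ge> N \<Longrightarrow> \<bar>s m - L\<bar> < r / 2"
    using LIMSEQ_D[OF assms, of "r / 2"] by auto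
  define C where "C = (\<Sum>m<N. \<bar>s m - L\<bar>)"
  obtain n0 where n0: "real n0 > 2 * C / r" using reals_Archimedean2 by blast
  show "\<exists>n1. \<forall>n\<ge>n1. norm ((\<Sum>m<n. s m) / real n - L) < r"
  proof (intro exI allI impI)
    fix n assume n: "n \<ge> max (Suc N) n0"
    then have "N \<le> n" "real n > 0" by auto
    have "\<bar>\<Sum>m<n. s m - L\<bar> \<le> (\<Sum>m<n. \<bar>s m - L\<bar>)"
      by (rule sum_abs)
    also have "\<dots> = C + (\<Sum>m\<in>{N..<n}. \<bar>s m - L\<bar>)"
      unfolding C_def using \<open>N \<le> n\<close> by (metis sum.atLeastLessThan_concat le0 lessThan_atLeast0)
    also have "(\<Sum>m\<in>{N..<n}. \<bar>s m - L\<bar>) \<le> (\<Sum>m\<in>{N..<n}. r / 2)"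
      using N by (intro sum_mono) (auto intro: less_imp_le)
    also have "\<dots> \<le> r / 2 * real n"
      using \<open>r > 0\<close> \<open>N \<le> n\<close> by (simp add: of_nat_diff)
    also have "C < r / 2 * real n"
    proof -
      have "2 * C / r < real n" using n0 n by linarith
      then show ?thesis using \<open>r > 0\<close> by (simp add: divide_less_eq mult.commute)
    qed
    finally have "\<bar>\<Sum>m<n. s m - L\<bar> < r * real n" by simp
    moreover have "(\<Sum>m<n. s m) / real n - L = (\<Sum>m<n. s m - L) / real n"
      using \<open>real n > 0\<close> by (simp add: sum_subtractf field_simps)
    ultimately show "norm ((\<Sum>m<n. s m) / real n - L) < r"
      using \<open>real n > 0\<close> by (simp add: abs_divide pos_divide_less_eq)
  qed
qed

lemma sum_sum_index_distance:
  fixes c :: "nat \<Rightarrow> 'a::comm_semiring_1"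
  shows "(\<Sum>i=1..n. \<Sum>j=1..n. c (max i j - min i j))
    = of_nat n * c 0 + 2 * (\<Sum>m<n. \<Sum>k=1..m. c k)"
proof (induction n)
  case 0
  then show ?case by simp
next
  case (Suc n)
  have border: "(\<Sum>i=1..n. c (max i (Suc n) - min i (Suc n))) = (\<Sum>k=1..n. c k)"
  proof -
    have "(\<Sum>i=1..n. c (max i (Suc n) - min i (Suc n))) = (\<Sum>i=1..n. c (Suc n - i))"
      by (intro sum.cong) auto
    also have "\<dots> = (\<Sum>k=1..n. c k)"
      by (subst sum.atLeastAtMost_rev) (intro sum.cong, auto)
    finally show ?thesis .
  qed
  have "(\<Sum>i=1..Suc n. \<Sum>j=1..Suc n. c (max i j - min i j))
      = (\<Sum>i=1..n. \<Sum>j=1..n. c (max i j - min i j)) + (\<Sum>i=1..n. c (max i (Suc n) - min i (Suc n)))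
        + (\<Sum>j=1..n. c (max (Suc n) j - min (Suc n) j)) + c 0"
    by (simp add: sum.distrib add_ac)
  also have "\<dots> = of_nat n * c 0 + 2 * (\<Sum>m<n. \<Sum>k=1..m. c k) + 2 * (\<Sum>k=1..n. c k) + c 0"
    using Suc.IH border by (simp add: max.commute min.commute mult_2 add_ac)
  finally show ?case by (simp add: algebra_simps)
qed

lemma mean_sum_sum_index_distance_tendsto:
  fixes c :: "nat \<Rightarrow> real"
  assumes "summable (\<lambda>k. c (Suc k))"
  shows "(\<lambda>n. (\<Sum>i=1..n. \<Sum>j=1..n. c (max i j - min i j)) / real n)
    \<longlonglongrightarrow> c 0 + 2 * (\<Sum>k. c (Suc k))"
proof -
  have "(\<lambda>m. \<Sum>k<m. c (Suc k)) \<longlonglongrightarrow> (\<Sum>k. c (Suc k))"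
    using assms by (rule summable_LIMSEQ)
  moreover have "(\<Sum>k<m. c (Suc k)) = (\<Sum>k=1..m. c k)" for m
    by (induction m) (simp_all add: atLeastAtMostSuc_conv)
  ultimately have "(\<lambda>m. \<Sum>k=1..m. c k) \<longlonglongrightarrow> (\<Sum>k. c (Suc k))"
    by simp
  then have "(\<lambda>n. c 0 + 2 * ((\<Sum>m<n. \<Sum>k=1..m. c k) / real n)) \<longlonglongrightarrow> c 0 + 2 * (\<Sum>k. c (Suc k))"
    by (intro tendsto_intros cesaro_mean_tendsto)
  moreover have "\<forall>\<^sub>F n in sequentially. c 0 + 2 * ((\<Sum>m<n. \<Sum>k=1..m. c k) / real n)
      = (\<Sum>i=1..n. \<Sum>j=1..n. c (max i j - min i j)) / real n"
    using eventually_gt_at_top[of 0]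
    by eventually_elim (use sum_sum_index_distance[of c] in \<open>simp add: field_simps\<close>)
  ultimately show ?thesis
    by (rule Lim_transform_eventually)
qed

section \<open>Convergence of moments under convergence in distribution\<close>

lemma eventually_ge_real_sequentially: "\<forall>\<^sub>F m in sequentially. r \<le> real m"
  using filterlim_real_sequentially by (simp add: filterlim_at_top)

lemma tendsto_of_uniform_approximation:
  fixes f :: "nat \<Rightarrow> 'a::metric_space" and a :: "nat \<Rightarrow> nat \<Rightarrow> 'a"
  assumes approx_lim: "\<And>m. (\<lambda>n. a m n) \<longlonglongrightarrow> b m" and "b \<longlonglongrightarrow> L"
    and uniform: "\<And>e. e > 0 \<Longrightarrow> \<forall>\<^sub>F m in sequentially. \<forall>n. dist (f n) (a m n) < e"
  shows "f \<longlonglongrightarrow> L"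
proof (rule metric_LIMSEQ_I)
  fix e :: real assume "e > 0"
  then have "\<forall>\<^sub>F m in sequentially. dist (b m) L < e / 3 \<and> (\<forall>n. dist (f n) (a m n) < e / 3)"
    using tendstoD[OF \<open>b \<longlonglongrightarrow> L\<close>, of "e / 3"] uniform[of "e / 3"] by (auto intro: eventually_conj)
  then obtain m where m: "dist (b m) L < e / 3" "\<And>n. dist (f n) (a m n) < e / 3"
    unfolding eventually_sequentially by blast
  obtain N where N: "\<And>n. n \<ge> N \<Longrightarrow> dist (a m n) (b m) < e / 3"
    using metric_LIMSEQ_D[OF approx_lim, of "e / 3" m] \<open>e > 0\<close> by auto
  have "dist (f n) L < e" if "n \<ge> N" for n
  proof -
    have "dist (f n) L \<le> dist (f n) (a m n) + dist (a m n) (b m) + dist (b m) L"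
      by (metis add.commute add_left_mono dist_triangle order_trans)
    then show ?thesis using m(1) m(2)[of n] N[OF that] by linarith
  qed
  then show "\<exists>N. \<forall>n\<ge>N. dist (f n) L < e" by blast
qed

lemma integrable_tail:
  fixes Y :: "'a \<Rightarrow> real"
  assumes "integrable M Y"
  shows "integrable M (\<lambda>\<omega>. indicator {\<omega>. c < \<bar>Y \<omega>\<bar>} \<omega> * \<bar>Y \<omega>\<bar>)"
  by (rule Bochner_Integration.integrable_bound[OF integrable_abs[OF assms]])
     (use assms in \<open>auto simp: indicator_def\<close>)

lemma unif_integrable_tail:
  assumes "unif_integrable M Y" "e > 0"
  obtains c0 where "\<And>c n. c \<ge> c0 \<Longrightarrow> (\<integral>\<omega>. indicator {\<omega>. c < \<bar>Y n \<omega>\<bar>} \<omega> * \<bar>Y n \<omega>\<bar> \<partial>M) < e"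
proof -
  have Y: "integrable M (Y n)" for n using assms(1) unfolding unif_integrable_def by blast
  have "\<forall>\<^sub>F c in at_top. (SUP n. \<integral>\<^sup>+\<omega>. ennreal (indicator {\<omega>. \<bar>Y n \<omega>\<bar> > c} \<omega> * \<bar>Y n \<omega>\<bar>) \<partial>M) < ennreal e"
    using assms unfolding unif_integrable_def by (intro order_tendstoD(2)) auto
  then obtain c0 where c0: "\<And>c. c \<ge> c0 \<Longrightarrow>
      (SUP n. \<integral>\<^sup>+\<omega>. ennreal (indicator {\<omega>. \<bar>Y n \<omega>\<bar> > c} \<omega> * \<bar>Y n \<omega>\<bar>) \<partial>M) < ennreal e"
    unfolding eventually_at_top_linorder by blast
  have "(\<integral>\<omega>. indicator {\<omega>. c < \<bar>Y n \<omega>\<bar>} \<omega> * \<bar>Y n \<omega>\<bar> \<partial>M) < e" if "c \<ge> c0" for c n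
  proof -
    have "ennreal (\<integral>\<omega>. indicator {\<omega>. c < \<bar>Y n \<omega>\<bar>} \<omega> * \<bar>Y n \<omega>\<bar> \<partial>M)
        = (\<integral>\<^sup>+\<omega>. ennreal (indicator {\<omega>. \<bar>Y n \<omega>\<bar> > c} \<omega> * \<bar>Y n \<omega>\<bar>) \<partial>M)"
      by (rule nn_integral_eq_integral[OF integrable_tail[OF Y], symmetric]) auto
    also have "\<dots> < ennreal e"
      using c0[OF that] by (meson SUP_upper UNIV_I order.strict_trans1)
    finally show ?thesis using \<open>e > 0\<close> by (simp add: ennreal_less_iff)
  qed
  then show thesis by (rule that)
qed

lemma unif_integrable_bounded:
  assumes "prob_space M" "unif_integrable M Y"
  obtains B where "\<And>n. (\<integral>\<omega>. \<bar>Y n \<omega>\<bar> \<partial>M) \<le> B"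
proof -
  interpret prob_space M by fact
  have Y: "integrable M (Y n)" for n using assms(2) unfolding unif_integrable_def by blast
  obtain c where c: "\<And>n. (\<integral>\<omega>. indicator {\<omega>. c < \<bar>Y n \<omega>\<bar>} \<omega> * \<bar>Y n \<omega>\<bar> \<partial>M) < 1" "c \<ge> 0"
    using unif_integrable_tail[OF assms(2), of 1] by (metis max.cobounded1 max.cobounded2 zero_less_one)
  have "(\<integral>\<omega>. \<bar>Y n \<omega>\<bar> \<partial>M) \<le> (\<integral>\<omega>. c + indicator {\<omega>. c < \<bar>Y n \<omega>\<bar>} \<omega> * \<bar>Y n \<omega>\<bar> \<partial>M)" for n
    by (intro integral_mono Bochner_Integration.integrable_add integrable_abs Y integrable_tail
          integrable_const) (use c(2) in \<open>simp add: indicator_def\<close>)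
  also have "\<dots> n < c + 1" for n
    using c(1)[of n] integrable_tail[OF Y[of n], of c]
    by (subst Bochner_Integration.integral_add) (simp_all add: prob_space)
  finally show thesis by (intro that[of "c + 1"] less_imp_le)
qed

lemma integrable_of_conv_in_distr:
  fixes Z :: "nat \<Rightarrow> 'a \<Rightarrow> 'b::metric_space" and w :: "'b \<Rightarrow> real"
  assumes mu: "prob_space mu" "sets mu = sets borel" and conv: "conv_in_distr M Z mu"
    and w: "continuous_on UNIV w" "\<And>x. 0 \<le> w x"
    and bounded: "\<And>n. integrable M (\<lambda>\<omega>. w (Z n \<omega>))" "\<And>n. (\<integral>\<omega>. w (Z n \<omega>) \<partial>M) \<le> B"
  shows "integrable mu w"
proof -
  interpret mu: prob_space mu by fact
  define g where "g m x = min (w x) (real m)" for m x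
  have w_meas[measurable]: "w \<in> borel_measurable mu"
    using borel_measurable_continuous_onI[OF w(1)] measurable_cong_sets[OF mu(2) refl] by blast
  have g_cont: "continuous_on UNIV (g m)" for m
    unfolding g_def by (intro continuous_intros w(1))
  have g_integrable: "integrable mu (g m)" for m
    unfolding g_def by (rule mu.integrable_const_bound[where B="real m"]) (use w(2) in auto)
  have g_le: "integral\<^sup>L mu (g m) \<le> B" for m
  proof (rule LIMSEQ_le_const2)
    have "bounded (range (g m))"
      unfolding bounded_iff g_def using w(2) by (intro exI[of _ "real m"]) auto
    then show "(\<lambda>n. \<integral>\<omega>. g m (Z n \<omega>) \<partial>M) \<longlonglongrightarrow> integral\<^sup>L mu (g m)"
      using conv g_cont unfolding conv_in_distr_def by blast
    have "(\<integral>\<omega>. g m (Z n \<omega>) \<partial>M) \<le> (\<integral>\<omega>. w (Z n \<omega>) \<partial>M)" for n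
      by (rule integral_mono'[OF bounded(1)]) (auto simp: g_def w(2))
    then show "\<exists>N. \<forall>n\<ge>N. (\<integral>\<omega>. g m (Z n \<omega>) \<partial>M) \<le> B"
      using bounded(2) order_trans by blast
  qed
  show ?thesis
  proof (rule integrable_monotone_convergence[OF g_integrable _ _ _ w_meas])
    show "AE x in mu. mono (\<lambda>m. g m x)" by (auto simp: g_def mono_def)
    show "AE x in mu. (\<lambda>m. g m x) \<longlonglongrightarrow> w x"
    proof (rule AE_I2, rule tendsto_eventually)
      fix x
      show "\<forall>\<^sub>F m in sequentially. g m x = w x"
        using eventually_ge_real_sequentially[of "w x"] by eventually_elim (simp add: g_def)
    qed
    have "incseq (\<lambda>m. integral\<^sup>L mu (g m))"
      unfolding incseq_def by (intro allI impI integral_mono g_integrable) (auto simp: g_def)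
    then show "(\<lambda>m. integral\<^sup>L mu (g m)) \<longlonglongrightarrow> (SUP m. integral\<^sup>L mu (g m))"
      using g_le by (intro LIMSEQ_incseq_SUP bdd_aboveI) auto
  qed
qed

definition truncation :: "real \<Rightarrow> real \<Rightarrow> real" where
  "truncation r x = max (- r) (min r x)"

lemma abs_truncation_le: "r \<ge> 0 \<Longrightarrow> \<bar>truncation r x\<bar> \<le> r"
  by (auto simp: truncation_def)

lemma truncation_error_le:
  fixes q w K r :: real
  assumes "\<bar>q\<bar> \<le> K * w" "K > 0" "r \<ge> 0"
  shows "\<bar>q - truncation r q\<bar> \<le> K * (indicator {x. r / K < \<bar>x\<bar>} w * \<bar>w\<bar>)"
proof (cases "\<bar>q\<bar> \<le> r")
  case True
  then show ?thesis using assms by (auto simp: truncation_def indicator_def)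
next
  case False
  then have "r / K < w" using assms by (simp add: divide_less_eq mult.commute)
  moreover have "0 < w" using calculation assms by (smt (verit) divide_nonneg_pos)
  ultimately show ?thesis using False assms by (auto simp: truncation_def indicator_def)
qed

lemma integral_truncation_tendsto:
  fixes q :: "'a \<Rightarrow> real"
  assumes "integrable M q"
  shows "(\<lambda>m. \<integral>x. truncation (real m) (q x) \<partial>M) \<longlonglongrightarrow> (\<integral>x. q x \<partial>M)"
proof (rule integral_dominated_convergence[where w="\<lambda>x. \<bar>q x\<bar>"])
  show "AE x in M. (\<lambda>m. truncation (real m) (q x)) \<longlonglongrightarrow> q x"
  proof (rule AE_I2, rule tendsto_eventually)
    fix x
    show "\<forall>\<^sub>F m in sequentially. truncation (real m) (q x) = q x"
      using eventually_ge_real_sequentially[of "\<bar>q x\<bar>"] by eventually_elim (auto simp: truncation_def)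
  qed
qed (use assms in \<open>auto simp: truncation_def\<close>)

lemma unif_integrable_truncation_error:
  fixes Q Y :: "nat \<Rightarrow> 'a \<Rightarrow> real"
  assumes M: "prob_space M" and UI: "unif_integrable M Y" and "K > 0"
    and Q: "\<And>n. Q n \<in> borel_measurable M" "\<And>n \<omega>. \<bar>Q n \<omega>\<bar> \<le> K * Y n \<omega>" and "e > 0"
  shows "\<forall>\<^sub>F m in sequentially. \<forall>n. dist (\<integral>\<omega>. Q n \<omega> \<partial>M) (\<integral>\<omega>. truncation (real m) (Q n \<omega>) \<partial>M) < e"
proof -
  interpret prob_space M by fact
  have Y: "integrable M (Y n)" for n
    using UI unfolding unif_integrable_def by blast
  have Q_integrable: "integrable M (Q n)" for n
    by (rule Bochner_Integration.integrable_bound[OF integrable_mult_right[OF Y[of n], of K] Q(1)])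
       (use Q(2) in \<open>auto intro: order_trans[OF _ abs_ge_self]\<close>)
  obtain c0 where c0: "\<And>c n. c \<ge> c0 \<Longrightarrow>
      (\<integral>\<omega>. indicator {\<omega>. c < \<bar>Y n \<omega>\<bar>} \<omega> * \<bar>Y n \<omega>\<bar> \<partial>M) < e / K"
    using unif_integrable_tail[OF UI] \<open>e > 0\<close> \<open>K > 0\<close> by (metis divide_pos_pos)
  show ?thesis
    using eventually_ge_real_sequentially[of "K * c0"]
  proof eventually_elim
    case (elim m)
    then have "c0 \<le> real m / K" using \<open>K > 0\<close> by (simp add: le_divide_eq mult.commute)
    have truncated_integrable: "integrable M (\<lambda>\<omega>. truncation (real m) (Q n \<omega>))" for n
      by (rule integrable_const_bound[where B="real m"])
         (use Q(1) in \<open>auto simp: truncation_def\<close>)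
    have "dist (\<integral>\<omega>. Q n \<omega> \<partial>M) (\<integral>\<omega>. truncation (real m) (Q n \<omega>) \<partial>M) < e" for n
    proof -
      have "dist (\<integral>\<omega>. Q n \<omega> \<partial>M) (\<integral>\<omega>. truncation (real m) (Q n \<omega>) \<partial>M)
          = \<bar>\<integral>\<omega>. Q n \<omega> - truncation (real m) (Q n \<omega>) \<partial>M\<bar>"
        by (simp add: dist_real_def Q_integrable truncated_integrable)
      also have "\<dots> \<le> (\<integral>\<omega>. K * (indicator {\<omega>. real m / K < \<bar>Y n \<omega>\<bar>} \<omega> * \<bar>Y n \<omega>\<bar>) \<partial>M)"
      proof (rule order_trans[OF integral_abs_bound integral_mono])
        show "\<bar>Q n \<omega> - truncation (real m) (Q n \<omega>)\<bar>
            \<le> K * (indicator {\<omega>. real m / K < \<bar>Y n \<omega>\<bar>} \<omega> * \<bar>Y n \<omega>\<bar>)" for \<omega>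
          using truncation_error_le[OF Q(2) \<open>K > 0\<close>, of "real m" n \<omega>]
          by (simp add: indicator_def)
      qed (use Q_integrable truncated_integrable integrable_tail[OF Y] in auto)
      also have "\<dots> = K * (\<integral>\<omega>. indicator {\<omega>. real m / K < \<bar>Y n \<omega>\<bar>} \<omega> * \<bar>Y n \<omega>\<bar> \<partial>M)"
        by simp
      also have "\<dots> < K * (e / K)"
        by (rule mult_strict_left_mono[OF c0[OF \<open>c0 \<le> real m / K\<close>] \<open>K > 0\<close>])
      finally show ?thesis using \<open>K > 0\<close> by simp
    qed
    then show ?case by blast
  qed
qed

lemma conv_in_distr_integral_tendsto:
  fixes Z :: "nat \<Rightarrow> 'a \<Rightarrow> 'b::metric_space" and q w :: "'b \<Rightarrow> real"
  assumes M: "prob_space M" and mu: "prob_space mu" "sets mu = sets borel"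
    and Z: "\<And>n. Z n \<in> borel_measurable M" and conv: "conv_in_distr M Z mu"
    and UI: "unif_integrable M (\<lambda>n \<omega>. w (Z n \<omega>))"
    and w: "continuous_on UNIV w" "\<And>x. 0 \<le> w x"
    and q: "continuous_on UNIV q" "\<And>x. \<bar>q x\<bar> \<le> K * w x"
  shows "(\<lambda>n. \<integral>\<omega>. q (Z n \<omega>) \<partial>M) \<longlonglongrightarrow> (\<integral>x. q x \<partial>mu)"
proof -
  define K' where "K' = max K 1"
  have K': "K' > 0" "\<And>x. \<bar>q x\<bar> \<le> K' * w x"
    unfolding K'_def using q(2) w(2)
    by (auto intro: order_trans[OF _ mult_right_mono[of K "max K 1"]])
  have q_measurable[measurable]: "q \<in> borel_measurable borel"
    by (rule borel_measurable_continuous_onI[OF q(1)])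
  have wZ: "integrable M (\<lambda>\<omega>. w (Z n \<omega>))" for n
    using UI unfolding unif_integrable_def by blast
  obtain B where "\<And>n. (\<integral>\<omega>. \<bar>w (Z n \<omega>)\<bar> \<partial>M) \<le> B"
    using unif_integrable_bounded[OF M UI] by blast
  then have w_integrable: "integrable mu w"
    using w(2) by (intro integrable_of_conv_in_distr[OF mu conv w wZ]) auto
  have "q \<in> borel_measurable mu"
    using q_measurable measurable_cong_sets[OF mu(2) refl] by blast
  then have q_integrable: "integrable mu q"
    using K' w(2)
    by (intro Bochner_Integration.integrable_bound[OF integrable_mult_right[OF w_integrable, of K']]) auto
  have truncated_tendsto: "(\<lambda>n. \<integral>\<omega>. truncation (real m) (q (Z n \<omega>)) \<partial>M)
      \<longlonglongrightarrow> (\<integral>x. truncation (real m) (q x) \<partial>mu)" for m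
  proof -
    have "continuous_on UNIV (\<lambda>x. truncation (real m) (q x))"
      unfolding truncation_def by (intro continuous_intros q(1))
    moreover have "bounded (range (\<lambda>x. truncation (real m) (q x)))"
      unfolding bounded_iff by (intro exI[of _ "real m"]) (simp add: abs_truncation_le)
    ultimately show ?thesis using conv unfolding conv_in_distr_def by blast
  qed
  show ?thesis
    using Z by (intro tendsto_of_uniform_approximation[OF truncated_tendsto
        integral_truncation_tendsto[OF q_integrable] unif_integrable_truncation_error[OF M UI K'(1)]])
      (auto simp: K'(2))
qed

lemma conv_in_distr_Suc:
  assumes "conv_in_distr M Z mu"
  shows "conv_in_distr M (\<lambda>n. Z (Suc n)) mu"
  using assms unfolding conv_in_distr_def by (auto intro: LIMSEQ_Suc)

lemma bounded_bilinear_diag_scaleR: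
  "bounded_bilinear \<phi> \<Longrightarrow> \<phi> (c *\<^sub>R x) (c *\<^sub>R x) = c\<^sup>2 * \<phi> x x"
  by (simp add: bounded_bilinear.scaleR_left bounded_bilinear.scaleR_right power2_eq_square)

lemma bilinear_moment_tendsto_of_conv_in_distr:
  fixes S :: "nat \<Rightarrow> 'a \<Rightarrow> 'b::{real_normed_vector, second_countable_topology}"
    and \<phi> :: "'b \<Rightarrow> 'b \<Rightarrow> real"
  assumes "prob_space M" "prob_space mu" "sets mu = sets borel" "bounded_bilinear \<phi>"
    and S_measurable: "\<And>n. S n \<in> borel_measurable M"
    and conv: "conv_in_distr M (\<lambda>n \<omega>. (1 / sqrt (real n)) *\<^sub>R S n \<omega>) mu"
    and UI: "unif_integrable M (\<lambda>n \<omega>. (norm (S (Suc n) \<omega>))\<^sup>2 / real (Suc n))"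
  shows "(\<lambda>n. (\<integral>\<omega>. \<phi> (S n \<omega>) (S n \<omega>) \<partial>M) / real n) \<longlonglongrightarrow> (\<integral>x. \<phi> x x \<partial>mu)"
proof -
  define Z where "Z n \<omega> = (1 / sqrt (real n)) *\<^sub>R S n \<omega>" for n \<omega>
  have Z_measurable: "Z n \<in> borel_measurable M" for n
    unfolding Z_def using S_measurable by measurable
  have norm_Z: "(norm (Z n \<omega>))\<^sup>2 = (norm (S n \<omega>))\<^sup>2 / real n" for n \<omega>
    by (simp add: Z_def power_mult_distrib power_divide)
  have \<phi>_Z: "\<phi> (Z n \<omega>) (Z n \<omega>) = \<phi> (S n \<omega>) (S n \<omega>) / real n" for n \<omega>
    by (simp add: Z_def bounded_bilinear_diag_scaleR[OF assms(4)] power_divide)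
  obtain K where K: "\<And>x y. norm (\<phi> x y) \<le> norm x * norm y * K"
    using bounded_bilinear.bounded[OF assms(4)] by blast
  have "\<bar>\<phi> x x\<bar> \<le> K * (norm x)\<^sup>2" for x
    using K[of x x] by (simp add: power2_eq_square ac_simps)
  moreover have "continuous_on UNIV (\<lambda>x. \<phi> x x)"
    by (intro bounded_bilinear.continuous_on[OF assms(4)] continuous_on_id)
  ultimately have "(\<lambda>n. \<integral>\<omega>. \<phi> (Z (Suc n) \<omega>) (Z (Suc n) \<omega>) \<partial>M) \<longlonglongrightarrow> (\<integral>x. \<phi> x x \<partial>mu)"
    using conv_in_distr_Suc[OF conv[folded Z_def]] UI[folded norm_Z] Z_measurable
    by (intro conv_in_distr_integral_tendsto[where w = "\<lambda>x. (norm x)\<^sup>2" and K = K] assms(1-3))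
       (auto intro: continuous_intros)
  then show ?thesis
    unfolding \<phi>_Z integral_divide_zero by (rule LIMSEQ_imp_Suc)
qed

section \<open>Correlations controlled by the coefficients \<gamma>(k)\<close>

lemma bilin_norm_le1_scaled:
  assumes "bounded_bilinear \<phi>" "K > 0" "\<And>x y. norm (\<phi> x y) \<le> norm x * norm y * K"
  shows "bilin_norm_le1 (\<lambda>x y. \<phi> x y / K)"
proof -
  interpret bounded_bilinear \<phi> by fact
  have "bounded_bilinear (\<lambda>x y. \<phi> x y / K)"
  proof
    show "\<exists>K'. \<forall>x y. norm (\<phi> x y / K) \<le> norm x * norm y * K'"
      using assms(2,3) by (intro exI[of _ 1]) (simp add: divide_le_eq)
  qed (simp_all add: add_left add_right scaleR_left scaleR_right add_divide_distrib)
  then show ?thesis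
    using assms(2,3) by (simp add: bilin_norm_le1_def cont_bilinear_form_def divide_le_eq abs_divide)
qed

lemma abs_integral_le_gamma_coef:
  fixes X :: "int \<Rightarrow> 'a \<Rightarrow> 'b::real_normed_vector"
  assumes "finite_measure M" "subalgebra M F0" "bilin_norm_le1 A"
    and A_integrable: "integrable M (\<lambda>\<omega>. A (X 0 \<omega>) (X k \<omega>))"
  shows "ennreal \<bar>\<integral>\<omega>. A (X 0 \<omega>) (X k \<omega>) \<partial>M\<bar> \<le> gamma_coef M F0 X k"
  unfolding gamma_coef_def
proof (rule INF_greatest, clarify)
  fix Y assume "\<forall>A. bilin_norm_le1 A \<longrightarrow>
      (AE \<omega> in M. ennreal \<bar>real_cond_exp M F0 (\<lambda>\<omega>. A (X 0 \<omega>) (X k \<omega>)) \<omega>\<bar> \<le> Y \<omega>)"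
  then have Y: "AE \<omega> in M. ennreal \<bar>real_cond_exp M F0 (\<lambda>\<omega>. A (X 0 \<omega>) (X k \<omega>)) \<omega>\<bar> \<le> Y \<omega>"
    using assms(3) by blast
  interpret finite_measure M by fact
  interpret finite_measure_subalgebra M F0 by unfold_locales (fact assms(2))
  have "(\<integral>\<omega>. A (X 0 \<omega>) (X k \<omega>) \<partial>M) = (\<integral>\<omega>. real_cond_exp M F0 (\<lambda>\<omega>. A (X 0 \<omega>) (X k \<omega>)) \<omega> \<partial>M)"
    by (rule real_cond_exp_int(2)[OF A_integrable, symmetric])
  then have "ennreal \<bar>\<integral>\<omega>. A (X 0 \<omega>) (X k \<omega>) \<partial>M\<bar>
      \<le> (\<integral>\<^sup>+\<omega>. norm (real_cond_exp M F0 (\<lambda>\<omega>. A (X 0 \<omega>) (X k \<omega>)) \<omega>) \<partial>M)"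
    using integral_norm_bound_ennreal[OF real_cond_exp_int(1)[OF A_integrable]] by simp
  also have "\<dots> \<le> (\<integral>\<^sup>+\<omega>. Y \<omega> \<partial>M)"
    using Y by (intro nn_integral_mono_AE) auto
  finally show "ennreal \<bar>\<integral>\<omega>. A (X 0 \<omega>) (X k \<omega>) \<partial>M\<bar> \<le> (\<integral>\<^sup>+\<omega>. Y \<omega> \<partial>M)" .
qed

lemma summable_of_gamma_coef:
  fixes X :: "int \<Rightarrow> 'a \<Rightarrow> 'b::real_normed_vector" and \<phi> :: "'b \<Rightarrow> 'b \<Rightarrow> real"
  assumes "finite_measure M" "subalgebra M F0" "bounded_bilinear \<phi>"
    and gamma_finite: "(\<Sum>k. gamma_coef M F0 X (int k + 1)) < \<infinity>"
    and \<phi>_integrable: "\<And>k. integrable M (\<lambda>\<omega>. \<phi> (X 0 \<omega>) (X (int k + 1) \<omega>))"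
  shows "summable (\<lambda>k. \<integral>\<omega>. \<phi> (X 0 \<omega>) (X (int k + 1) \<omega>) \<partial>M)"
proof -
  obtain K where K: "K > 0" "\<And>x y. norm (\<phi> x y) \<le> norm x * norm y * K"
    using bounded_bilinear.pos_bounded[OF assms(3)] by blast
  define c where "c k = (\<integral>\<omega>. \<phi> (X 0 \<omega>) (X (int k + 1) \<omega>) \<partial>M)" for k
  have "ennreal (\<bar>c k\<bar> / K) \<le> gamma_coef M F0 X (int k + 1)" for k
    using abs_integral_le_gamma_coef[OF assms(1,2) bilin_norm_le1_scaled[OF assms(3) K]]
      \<phi>_integrable[of k] K(1)
    by (simp add: c_def abs_divide)
  then have "(\<Sum>k. ennreal (\<bar>c k\<bar> / K)) \<noteq> \<top>"
    using gamma_finite suminf_le[of "\<lambda>k. ennreal (\<bar>c k\<bar> / K)"] by (auto simp: top_unique)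
  then have "summable (\<lambda>k. \<bar>c k\<bar> / K)"
    using K(1) by (intro summable_suminf_not_top) auto
  then have "summable (\<lambda>k. \<bar>c k\<bar>)"
    using summable_mult[of _ K] K(1) by fastforce
  then show ?thesis
    unfolding c_def by (rule summable_rabs_cancel)
qed

section \<open>Second moments of a stationary sequence\<close>

lemma integrable_bilinear:
  fixes f g :: "'a \<Rightarrow> 'b::{banach, second_countable_topology}" and \<phi> :: "'b \<Rightarrow> 'b \<Rightarrow> real"
  assumes "bounded_bilinear \<phi>" "f \<in> borel_measurable M" "g \<in> borel_measurable M"
    and "integrable M (\<lambda>\<omega>. (norm (f \<omega>))\<^sup>2)" "integrable M (\<lambda>\<omega>. (norm (g \<omega>))\<^sup>2)"
  shows "integrable M (\<lambda>\<omega>. \<phi> (f \<omega>) (g \<omega>))"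
proof -
  interpret bounded_bilinear \<phi> by fact
  obtain K where K: "K > 0" "\<And>x y. norm (\<phi> x y) \<le> norm x * norm y * K"
    using pos_bounded by blast
  have "continuous_on UNIV (\<lambda>z. \<phi> (fst z) (snd z))"
    by (intro continuous_on continuous_on_fst continuous_on_snd continuous_on_id)
  then have measurable: "(\<lambda>\<omega>. \<phi> (f \<omega>) (g \<omega>)) \<in> borel_measurable M"
    by (rule borel_measurable_continuous_Pair[OF assms(2,3)])
  have bound: "norm (\<phi> x y) \<le> norm (K / 2 * ((norm x)\<^sup>2 + (norm y)\<^sup>2))" for x y
  proof -
    have "norm (\<phi> x y) \<le> K / 2 * (2 * norm x * norm y)"
      using K(2)[of x y] by (simp add: ac_simps)
    also have "\<dots> \<le> K / 2 * ((norm x)\<^sup>2 + (norm y)\<^sup>2)"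
      using K(1) sum_squares_bound by (intro mult_left_mono) auto
    finally show ?thesis using K(1) by simp
  qed
  have "integrable M (\<lambda>\<omega>. K / 2 * ((norm (f \<omega>))\<^sup>2 + (norm (g \<omega>))\<^sup>2))"
    using assms(4,5) by (intro integrable_mult_right Bochner_Integration.integrable_add)
  then show ?thesis
    by (rule Bochner_Integration.integrable_bound[OF _ measurable]) (intro AE_I2 bound)
qed

locale stationary_sequence = prob_space M for M :: "'a measure" +
  fixes T :: "'a \<Rightarrow> 'a" and X :: "int \<Rightarrow> 'a \<Rightarrow> 'b::{banach, second_countable_topology}"
  assumes T_measurable[measurable]: "T \<in> M \<rightarrow>\<^sub>M M"
    and T_preserving: "distr M M T = M"
    and X_shift: "\<And>n \<omega>. \<omega> \<in> space M \<Longrightarrow> X (int n) \<omega> = X 0 ((T ^^ n) \<omega>)"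
    and X0_measurable[measurable]: "X 0 \<in> borel_measurable M"
    and X0_square_integrable: "integrable M (\<lambda>\<omega>. (norm (X 0 \<omega>))\<^sup>2)"
begin

lemma funpow_T_measurable[measurable]: "T ^^ n \<in> M \<rightarrow>\<^sub>M M"
  by (rule measurable_funpow[OF T_measurable])

lemma integral_funpow_T:
  fixes g :: "'a \<Rightarrow> 'c::{banach, second_countable_topology}"
  assumes "g \<in> borel_measurable M"
  shows "(\<integral>\<omega>. g ((T ^^ n) \<omega>) \<partial>M) = (\<integral>\<omega>. g \<omega> \<partial>M)"
  using integral_distr[OF funpow_T_measurable assms] distr_funpow[OF T_measurable T_preserving]
  by simp

lemma integrable_funpow_T_iff:
  fixes g :: "'a \<Rightarrow> 'c::{banach, second_countable_topology}"
  assumes "g \<in> borel_measurable M"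
  shows "integrable M (\<lambda>\<omega>. g ((T ^^ n) \<omega>)) \<longleftrightarrow> integrable M g"
  using integrable_distr_eq[OF funpow_T_measurable assms] distr_funpow[OF T_measurable T_preserving]
  by simp

lemma X_measurable[measurable]: "X (int n) \<in> borel_measurable M"
  by (rule measurable_cong[THEN iffD2, OF X_shift]) measurable

lemma X_square_integrable: "integrable M (\<lambda>\<omega>. (norm (X (int n) \<omega>))\<^sup>2)"
proof -
  have "integrable M (\<lambda>\<omega>. (norm (X 0 ((T ^^ n) \<omega>)))\<^sup>2)"
    using integrable_funpow_T_iff[of "\<lambda>\<omega>. (norm (X 0 \<omega>))\<^sup>2" n] X0_square_integrable by simp
  then show ?thesis
    by (rule Bochner_Integration.integrable_cong[THEN iffD1, rotated 2]) (simp_all add: X_shift)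
qed

lemma integrable_bilinear_X:
  fixes \<phi> :: "'b \<Rightarrow> 'b \<Rightarrow> real"
  assumes "bounded_bilinear \<phi>"
  shows "integrable M (\<lambda>\<omega>. \<phi> (X (int i) \<omega>) (X (int j) \<omega>))"
  by (intro integrable_bilinear[OF assms] X_measurable X_square_integrable)

lemma integral_bilinear_shift:
  fixes \<phi> :: "'b \<Rightarrow> 'b \<Rightarrow> real"
  assumes "bounded_bilinear \<phi>" "i \<le> j"
  shows "(\<integral>\<omega>. \<phi> (X (int i) \<omega>) (X (int j) \<omega>) \<partial>M) = (\<integral>\<omega>. \<phi> (X 0 \<omega>) (X (int (j - i)) \<omega>) \<partial>M)"
proof -
  define F where "F \<omega> = \<phi> (X 0 \<omega>) (X (int (j - i)) \<omega>)" for \<omega>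
  have "F \<in> borel_measurable M"
    unfolding F_def using integrable_bilinear_X[OF assms(1), of 0 "j - i"]
    by (simp add: borel_measurable_integrable)
  have "(\<integral>\<omega>. \<phi> (X (int i) \<omega>) (X (int j) \<omega>) \<partial>M) = (\<integral>\<omega>. F ((T ^^ i) \<omega>) \<partial>M)"
  proof (rule Bochner_Integration.integral_cong[OF refl])
    fix \<omega> assume "\<omega> \<in> space M"
    moreover have "(T ^^ j) \<omega> = (T ^^ (j - i)) ((T ^^ i) \<omega>)"
      using assms(2) by (metis funpow_add le_add_diff_inverse2 comp_apply)
    ultimately show "\<phi> (X (int i) \<omega>) (X (int j) \<omega>) = F ((T ^^ i) \<omega>)"
      unfolding F_def by (simp add: X_shift measurable_space[OF funpow_T_measurable])
  qed
  also have "\<dots> = (\<integral>\<omega>. F \<omega> \<partial>M)"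
    by (rule integral_funpow_T) fact
  finally show ?thesis unfolding F_def .
qed

lemma integral_bilinear_partial_sum:
  fixes \<phi> :: "'b \<Rightarrow> 'b \<Rightarrow> real"
  assumes "bounded_bilinear \<phi>" and sym: "\<And>x y. \<phi> x y = \<phi> y x"
  shows "(\<integral>\<omega>. \<phi> (\<Sum>i=1..n. X (int i) \<omega>) (\<Sum>i=1..n. X (int i) \<omega>) \<partial>M)
    = (\<Sum>i=1..n. \<Sum>j=1..n. \<integral>\<omega>. \<phi> (X 0 \<omega>) (X (int (max i j - min i j)) \<omega>) \<partial>M)"
proof -
  interpret bounded_bilinear \<phi> by fact
  have "(\<integral>\<omega>. \<phi> (\<Sum>i=1..n. X (int i) \<omega>) (\<Sum>i=1..n. X (int i) \<omega>) \<partial>M)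
      = (\<integral>\<omega>. (\<Sum>i=1..n. \<Sum>j=1..n. \<phi> (X (int i) \<omega>) (X (int j) \<omega>)) \<partial>M)"
    by (simp add: sum_left sum_right) (subst sum.swap, simp)
  also have "\<dots> = (\<Sum>i=1..n. \<Sum>j=1..n. \<integral>\<omega>. \<phi> (X (int i) \<omega>) (X (int j) \<omega>) \<partial>M)"
    by (simp add: integrable_bilinear_X[OF assms(1)])
  also have "\<dots> = (\<Sum>i=1..n. \<Sum>j=1..n. \<integral>\<omega>. \<phi> (X 0 \<omega>) (X (int (max i j - min i j)) \<omega>) \<partial>M)"
  proof (intro sum.cong refl)
    fix i j :: nat
    show "(\<integral>\<omega>. \<phi> (X (int i) \<omega>) (X (int j) \<omega>) \<partial>M)
        = (\<integral>\<omega>. \<phi> (X 0 \<omega>) (X (int (max i j - min i j)) \<omega>) \<partial>M)"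
    proof (cases "i \<le> j")
      case True
      then show ?thesis by (simp add: integral_bilinear_shift[OF assms(1)])
    next
      case False
      then show ?thesis
        using integral_bilinear_shift[OF assms(1), of j i] by (simp add: sym[of "X (int i) _"])
    qed
  qed
  finally show ?thesis .
qed

lemma mean_bilinear_partial_sum_tendsto:
  fixes \<phi> :: "'b \<Rightarrow> 'b \<Rightarrow> real"
  assumes "bounded_bilinear \<phi>" "\<And>x y. \<phi> x y = \<phi> y x"
    and "summable (\<lambda>k. \<integral>\<omega>. \<phi> (X 0 \<omega>) (X (int k + 1) \<omega>) \<partial>M)"
  shows "(\<lambda>n. (\<integral>\<omega>. \<phi> (\<Sum>i=1..n. X (int i) \<omega>) (\<Sum>i=1..n. X (int i) \<omega>) \<partial>M) / real n)
    \<longlonglongrightarrow> (\<integral>\<omega>. \<phi> (X 0 \<omega>) (X 0 \<omega>) \<partial>M) + 2 * (\<Sum>k. \<integral>\<omega>. \<phi> (X 0 \<omega>) (X (int k + 1) \<omega>) \<partial>M)"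
proof -
  define c where "c k = (\<integral>\<omega>. \<phi> (X 0 \<omega>) (X (int k) \<omega>) \<partial>M)" for k
  have "summable (\<lambda>k. c (Suc k))"
    using assms(3) by (simp add: c_def add.commute)
  then have "(\<lambda>n. (\<Sum>i=1..n. \<Sum>j=1..n. c (max i j - min i j)) / real n) \<longlonglongrightarrow> c 0 + 2 * (\<Sum>k. c (Suc k))"
    by (rule mean_sum_sum_index_distance_tendsto)
  then show ?thesis
    unfolding integral_bilinear_partial_sum[OF assms(1,2)] by (simp add: c_def add.commute)
qed

end

theorem mainTheorem2:
  fixes M :: "'a measure" and F0 :: "'a measure" and T :: "'a \<Rightarrow> 'a"
    and X :: "int \<Rightarrow> 'a \<Rightarrow> 'b::{banach, second_countable_topology}"
    and mu :: "'b measure"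
  assumes prob: "prob_space M"
    and T_meas: "T \<in> M \<rightarrow>\<^sub>M M" and T_bij: "bij_betw T (space M) (space M)"
    and T_inv_meas: "inv_into (space M) T \<in> M \<rightarrow>\<^sub>M M"
    and T_pres: "distr M M T = M"
    and X_def: "\<And>i \<omega>. \<omega> \<in> space M \<Longrightarrow> X i \<omega> = X 0 (Tpow M T i \<omega>)"
    and F0_sub: "subalgebra M F0"
    and F0_nondecr: "\<forall>A\<in>sets F0. \<exists>B\<in>sets F0. A = T -` B \<inter> space M"
    and X0_adapted: "X 0 \<in> borel_measurable F0"
    and centered: "integrable M (X 0)" "(\<integral>\<omega>. X 0 \<omega> \<partial>M) = 0"
    and L2: "integrable M (\<lambda>\<omega>. (norm (X 0 \<omega>))\<^sup>2)"
    and gamma_sum: "(\<Sum>k. gamma_coef M F0 X (int k + 1)) < \<infinity>"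
    and G_gauss: "gaussian_measure mu"
    and G_cov: "\<And>f g :: 'b \<Rightarrow> real. bounded_linear f \<Longrightarrow> bounded_linear g \<Longrightarrow>
        ((\<lambda>n. \<Sum>k\<in>{- int n..int n}.
             (\<integral>\<omega>. f (X 0 \<omega>) * g (X k \<omega>) \<partial>M) - (\<integral>\<omega>. f (X 0 \<omega>) \<partial>M) * (\<integral>\<omega>. g (X k \<omega>) \<partial>M))
          \<longlonglongrightarrow> (\<integral>x. f x * g x \<partial>mu) - (\<integral>x. f x \<partial>mu) * (\<integral>x. g x \<partial>mu))"
    and conv: "conv_in_distr M (\<lambda>n \<omega>. (1 / sqrt (real n)) *\<^sub>R (\<Sum>i=1..n. X (int i) \<omega>)) mu"
    and UI: "unif_integrable M (\<lambda>n \<omega>. (norm (\<Sum>i=1..Suc n. X (int i) \<omega>))\<^sup>2 / real (Suc n))"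
  shows "\<forall>\<phi> :: 'b \<Rightarrow> 'b \<Rightarrow> real. cont_bilinear_form \<phi> \<longrightarrow> (\<forall>x y. \<phi> x y = \<phi> y x) \<longrightarrow>
     summable (\<lambda>k. \<integral>\<omega>. \<phi> (X 0 \<omega>) (X (int k + 1) \<omega>) \<partial>M) \<and>
     (\<integral>x. \<phi> x x \<partial>mu) = (\<integral>\<omega>. \<phi> (X 0 \<omega>) (X 0 \<omega>) \<partial>M)
        + 2 * (\<Sum>k. \<integral>\<omega>. \<phi> (X 0 \<omega>) (X (int k + 1) \<omega>) \<partial>M)"
proof (intro allI impI)
  fix \<phi> :: "'b \<Rightarrow> 'b \<Rightarrow> real"
  assume "cont_bilinear_form \<phi>" and sym: "\<forall>x y. \<phi> x y = \<phi> y x"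
  then have \<phi>: "bounded_bilinear \<phi>" by (simp add: cont_bilinear_form_def)
  interpret stationary_sequence M T X
    using prob T_meas T_pres X_def measurable_from_subalg[OF F0_sub X0_adapted] L2
    by (intro stationary_sequence.intro stationary_sequence_axioms.intro) (simp_all add: Tpow_def)
  have summable: "summable (\<lambda>k. \<integral>\<omega>. \<phi> (X 0 \<omega>) (X (int k + 1) \<omega>) \<partial>M)"
    using integrable_bilinear_X[OF \<phi>, of 0 "Suc _"]
    by (intro summable_of_gamma_coef[OF finite_measure_axioms F0_sub \<phi> gamma_sum]) (simp add: add.commute)
  have "(\<lambda>n. (\<integral>\<omega>. \<phi> (\<Sum>i=1..n. X (int i) \<omega>) (\<Sum>i=1..n. X (int i) \<omega>) \<partial>M) / real n)
      \<longlonglongrightarrow> (\<integral>x. \<phi> x x \<partial>mu)"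
    using G_gauss conv UI
    by (intro bilinear_moment_tendsto_of_conv_in_distr[OF prob _ _ \<phi>])
       (simp_all add: gaussian_measure_def)
  moreover have "(\<lambda>n. (\<integral>\<omega>. \<phi> (\<Sum>i=1..n. X (int i) \<omega>) (\<Sum>i=1..n. X (int i) \<omega>) \<partial>M) / real n)
      \<longlonglongrightarrow> (\<integral>\<omega>. \<phi> (X 0 \<omega>) (X 0 \<omega>) \<partial>M) + 2 * (\<Sum>k. \<integral>\<omega>. \<phi> (X 0 \<omega>) (X (int k + 1) \<omega>) \<partial>M)"
    by (rule mean_bilinear_partial_sum_tendsto[OF \<phi> _ summable]) (use sym in blast)
  ultimately show "summable (\<lambda>k. \<integral>\<omega>. \<phi> (X 0 \<omega>) (X (int k + 1) \<omega>) \<partial>M) \<and>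
     (\<integral>x. \<phi> x x \<partial>mu) = (\<integral>\<omega>. \<phi> (X 0 \<omega>) (X 0 \<omega>) \<partial>M)
        + 2 * (\<Sum>k. \<integral>\<omega>. \<phi> (X 0 \<omega>) (X (int k + 1) \<omega>) \<partial>M)"
    using summable LIMSEQ_unique by blast
qed

end
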